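(* Let $(G,X)$ be an augmented birack of characteristic $N$. For each $n$, let $C^D_n(X)\subseteq C_n(X)$ be the subgroup of $N$-degenerate chains. Then $\partial_n(C^D_n(X))\subseteq C^D_{n-1}(X)$ for all $n$, i.e. the $N$-degenerate chains form a subcomplex of $(C_\bullet(X),\partial)$.
   Context: Augmented birack: Let $X$ be a set and $G$ a subgroup of the group of bijections $X\to X$ (products in $G$ are compositions). An augmented birack structure on $(G,X)$ consists of maps $\alpha,\beta,\overline{\alpha},\overline{\beta}:X\to G$, written $x\mapsto \alpha_x,\beta_x,\overline{\alpha}_x,\overline{\beta}_x$, and an element $\pi\in G$ such that: (i) for all $x\in X$, $\alpha_{\pi(x)}(x)=\beta_x(\pi(x))$ and $\overline{\beta}_{\pi(x)}(x)=\overline{\alpha}_x(\pi(x))$; (ii) for all $x,y\in X$, $\overline{\alpha}_{\beta_x(y)}(\alpha_y(x))=x$, $\overline{\beta}_{\alpha_x(y)}(\beta_y(x))=x$, $\alpha_{\overline{\beta}_x(y)}(\overline{\alpha}_y(x))=x$, $\beta_{\overline{\alpha}_x(y)}(\overline{\beta}_y(x))=x$; (iii) for all $x,y\in X$, $\alpha_{\alpha_x(y)}\alpha_x=\alpha_{\beta_y(x)}\alpha_y$, $\beta_{\alpha_x(y)}\alpha_x=\alpha_{\beta_y(x)}\beta_y$, $\beta_{\alpha_x(y)}\beta_x=\beta_{\beta_y(x)}\beta_y$. The characteristic $N$ is the smallest positive integer with $\pi^N=\mathrm{id}_X$ (assumed to exist, e.g. $X$ finite). Chains: $C_n(X)=\mathbb{Z}[X^n]$;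 for $\vec x=(x_1,\dots,x_n)$ and $1\le k\le n$: $\partial'_k(\vec x)=(x_1,\dots,x_{k-1},x_{k+1},\dots,x_n)$, $\partial''_k(\vec x)=(\beta_{x_k}(x_1),\dots,\beta_{x_k}(x_{k-1}),\alpha_{x_k}(x_{k+1}),\dots,\alpha_{x_k}(x_n))$, and $\partial_n(\vec x)=\sum_{k=1}^n(-1)^k(\partial'_k(\vec x)-\partial''_k(\vec x))$, extended linearly. An element of $C_n(X)$ is $N$-degenerate if it is a $\mathbb{Z}$-linear combination of elements of the form $\sum_{k=1}^N(x_1,\dots,x_{j-1},\pi^k(x_j),\pi^{k-1}(x_j),x_{j+2},\dots,x_n)$ with $1\le j\le n-1$ and $x_i\in X$; $C^D_n(X)$ denotes the group of $N$-degenerate $n$-chains. *)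

theory Defs
  imports "HOL-Library.Poly_Mapping"
begin

(* The set X is modelled by the type 'x.  G is a set of bijections 'x => 'x forming
   a subgroup of the symmetric group under composition. *)
definition bij_subgroup :: "('x \<Rightarrow> 'x) set \<Rightarrow> bool" where
  "bij_subgroup G \<longleftrightarrow> G \<subseteq> {f. bij f} \<and> id \<in> G
     \<and> (\<forall>f\<in>G. \<forall>g\<in>G. f \<circ> g \<in> G) \<and> (\<forall>f\<in>G. inv f \<in> G)"

(* augmented birack structure (alpha, beta, alpha-bar, beta-bar, pi) on (G, X);
   alpha x denotes alpha_x etc. *)
definition augmented_birack ::
  "('x \<Rightarrow> 'x) set \<Rightarrow> ('x \<Rightarrow> 'x \<Rightarrow> 'x) \<Rightarrow> ('x \<Rightarrow> 'x \<Rightarrow> 'x) \<Rightarrow>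
   ('x \<Rightarrow> 'x \<Rightarrow> 'x) \<Rightarrow> ('x \<Rightarrow> 'x \<Rightarrow> 'x) \<Rightarrow> ('x \<Rightarrow> 'x) \<Rightarrow> bool" where
  "augmented_birack G \<alpha> \<beta> \<alpha>b \<beta>b \<pi> \<longleftrightarrow>
     bij_subgroup G \<and>
     (\<forall>x. \<alpha> x \<in> G \<and> \<beta> x \<in> G \<and> \<alpha>b x \<in> G \<and> \<beta>b x \<in> G) \<and> \<pi> \<in> G \<and>
     (\<forall>x. \<alpha> (\<pi> x) x = \<beta> x (\<pi> x) \<and> \<beta>b (\<pi> x) x = \<alpha>b x (\<pi> x)) \<and>
     (\<forall>x y. \<alpha>b (\<beta> x y) (\<alpha> y x) = x \<and> \<beta>b (\<alpha> x y) (\<beta> y x) = x \<and>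
            \<alpha> (\<beta>b x y) (\<alpha>b y x) = x \<and> \<beta> (\<alpha>b x y) (\<beta>b y x) = x) \<and>
     (\<forall>x y. \<alpha> (\<alpha> x y) \<circ> \<alpha> x = \<alpha> (\<beta> y x) \<circ> \<alpha> y \<and>
            \<beta> (\<alpha> x y) \<circ> \<alpha> x = \<alpha> (\<beta> y x) \<circ> \<beta> y \<and>
            \<beta> (\<alpha> x y) \<circ> \<beta> x = \<beta> (\<beta> y x) \<circ> \<beta> y)"

definition characteristic :: "('x \<Rightarrow> 'x) \<Rightarrow> nat" where
  "characteristic \<pi> = (LEAST N. 0 < N \<and> (\<pi> ^^ N) = id)"

(* Chains: C_n(X) = Z[X^n] is modelled inside 'x list \<Rightarrow>\<^sub>0 int (finitely supported
   integer combinations of tuples, tuples = lists); an n-chain is supported on lists of length n. *)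

(* face maps, 0-indexed: index k here corresponds to k+1 in the paper *)
definition face1 :: "nat \<Rightarrow> 'x list \<Rightarrow> 'x list" where
  "face1 k xs = take k xs @ drop (Suc k) xs"

definition face2 :: "('x \<Rightarrow> 'x \<Rightarrow> 'x) \<Rightarrow> ('x \<Rightarrow> 'x \<Rightarrow> 'x) \<Rightarrow> nat \<Rightarrow> 'x list \<Rightarrow> 'x list" where
  "face2 \<alpha> \<beta> k xs = map (\<beta> (xs ! k)) (take k xs) @ map (\<alpha> (xs ! k)) (drop (Suc k) xs)"

definition bd_basis :: "('x \<Rightarrow> 'x \<Rightarrow> 'x) \<Rightarrow> ('x \<Rightarrow> 'x \<Rightarrow> 'x) \<Rightarrow> 'x list \<Rightarrow> 'x list \<Rightarrow>\<^sub>0 int" where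
  "bd_basis \<alpha> \<beta> xs = (\<Sum>k<length xs. frag_cmul ((-1) ^ (Suc k))
       (frag_of (face1 k xs) - frag_of (face2 \<alpha> \<beta> k xs)))"

definition bd :: "('x \<Rightarrow> 'x \<Rightarrow> 'x) \<Rightarrow> ('x \<Rightarrow> 'x \<Rightarrow> 'x) \<Rightarrow> ('x list \<Rightarrow>\<^sub>0 int) \<Rightarrow> 'x list \<Rightarrow>\<^sub>0 int" where
  "bd \<alpha> \<beta> = frag_extend (bd_basis \<alpha> \<beta>)"

(* generators of N-degenerate n-chains:
   sum_{k=1..N} (x_1,...,x_{j-1}, pi^k(x_j), pi^(k-1)(x_j), x_{j+2},...,x_n),
   with ys = (x_1..x_{j-1}), zs = (x_{j+2}..x_n), 1 <= j <= n-1 *)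
definition degen_gen :: "('x \<Rightarrow> 'x) \<Rightarrow> nat \<Rightarrow> 'x list \<Rightarrow> 'x \<Rightarrow> 'x list \<Rightarrow> 'x list \<Rightarrow>\<^sub>0 int" where
  "degen_gen \<pi> N ys x zs = (\<Sum>k\<in>{1..N}. frag_of (ys @ (\<pi> ^^ k) x # (\<pi> ^^ (k - 1)) x # zs))"

inductive_set degen_chains :: "('x \<Rightarrow> 'x) \<Rightarrow> nat \<Rightarrow> nat \<Rightarrow> ('x list \<Rightarrow>\<^sub>0 int) set"
  for \<pi> :: "'x \<Rightarrow> 'x" and N :: nat and n :: nat where
  zero: "0 \<in> degen_chains \<pi> N n"
| gen: "length ys + 2 + length zs = n \<Longrightarrow> degen_gen \<pi> N ys x zs \<in> degen_chains \<pi> N n"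
| diff: "a \<in> degen_chains \<pi> N n \<Longrightarrow> b \<in> degen_chains \<pi> N n \<Longrightarrow> a - b \<in> degen_chains \<pi> N n"

end

theory Submission imports Defs begin

text \<open>
The actions alpha_x and beta_x do not change when x is replaced by pi x, and they commute
with pi; both facts follow from the kink condition, injectivity and the exchange laws.
Hence for a generator, the sum over k of (..., pi^k x, pi^(k-1) x, ...), the face at any
position away from the degenerate pair is again a difference of two generators, while the
faces at the two positions of the pair coincide: the second face maps both to the same
tuple, and the first faces agree after reindexing k by k - 1, which is possible because
pi^N = id. These two faces enter the boundary with opposite signs and cancel.
\<close>

definition face_chain ::
  "('x \<Rightarrow> 'x \<Rightarrow> 'x) \<Rightarrow> ('x \<Rightarrow> 'x \<Rightarrow> 'x) \<Rightarrow> nat \<Rightarrow> ('x list \<Rightarrow>\<^sub>0 int) \<Rightarrow> 'x list \<Rightarrow>\<^sub>0 int" where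
  "face_chain \<alpha> \<beta> i = frag_extend (\<lambda>xs. frag_of (face1 i xs) - frag_of (face2 \<alpha> \<beta> i xs))"

lemma bd_basis_eq_sum_face_chain:
  "bd_basis \<alpha> \<beta> xs = (\<Sum>i<length xs. frag_cmul ((-1) ^ Suc i) (face_chain \<alpha> \<beta> i (frag_of xs)))"
  by (simp add: bd_basis_def face_chain_def)

lemma bd_sum_eq_sum_face_chain:
  assumes "finite K" and "\<And>k. k \<in> K \<Longrightarrow> length (xs k) = n"
  shows "bd \<alpha> \<beta> (\<Sum>k\<in>K. frag_of (xs k))
           = (\<Sum>i<n. frag_cmul ((-1) ^ Suc i) (face_chain \<alpha> \<beta> i (\<Sum>k\<in>K. frag_of (xs k))))"
proof -
  have "bd \<alpha> \<beta> (\<Sum>k\<in>K. frag_of (xs k))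
          = (\<Sum>k\<in>K. \<Sum>i<n. frag_cmul ((-1) ^ Suc i) (face_chain \<alpha> \<beta> i (frag_of (xs k))))"
    using assms by (simp add: bd_def frag_extend_sum bd_basis_eq_sum_face_chain)
  also have "\<dots> = (\<Sum>i<n. frag_cmul ((-1) ^ Suc i) (face_chain \<alpha> \<beta> i (\<Sum>k\<in>K. frag_of (xs k))))"
    using assms(1) by (subst sum.swap) (simp add: face_chain_def frag_extend_sum frag_cmul_sum)
  finally show ?thesis .
qed

lemma alternating_sum_cancel_adjacent:
  fixes T :: "nat \<Rightarrow> 'a \<Rightarrow>\<^sub>0 int"
  assumes "Suc p < n" and "T p = T (Suc p)"
  shows "(\<Sum>i<n. frag_cmul ((-1) ^ Suc i) (T i))
           = (\<Sum>i\<in>{..<n} - {p, Suc p}. frag_cmul ((-1) ^ Suc i) (T i))"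
proof -
  have split: "{..<n} = insert p (insert (Suc p) ({..<n} - {p, Suc p}))"
    using assms(1) by auto
  have "frag_cmul ((-1) ^ Suc p) (T p) + frag_cmul ((-1) ^ Suc (Suc p)) (T (Suc p)) = 0"
    using assms(2) by (simp add: frag_cmul_distrib[symmetric])
  then show ?thesis
    by (subst split) (simp add: add.assoc[symmetric])
qed

lemma sum_funpow_periodic_shift:
  fixes g :: "'x \<Rightarrow> 'a::comm_monoid_add"
  assumes "(f ^^ N) = id" and "0 < N"
  shows "(\<Sum>k\<in>{1..N}. g ((f ^^ (k - 1)) x)) = (\<Sum>k\<in>{1..N}. g ((f ^^ k) x))"
proof -
  obtain M where M: "N = Suc M" using assms(2) by (cases N) auto
  define h where "h k = g ((f ^^ k) x)" for k
  have "(\<Sum>k\<in>{1..N}. h (k - 1)) = (\<Sum>k<N. h k)"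
    by (simp add: sum.atLeast1_atMost_eq)
  also have "\<dots> = h 0 + (\<Sum>k<M. h (Suc k))"
    unfolding M by (rule sum.lessThan_Suc_shift)
  also have "\<dots> = (\<Sum>k<M. h (Suc k)) + h N"
    using assms(1) by (simp add: h_def add.commute)
  also have "\<dots> = (\<Sum>k\<in>{1..N}. h k)"
    by (simp add: M sum.atLeast1_atMost_eq)
  finally show ?thesis by (simp add: h_def)
qed

lemma degen_chains_uminus: "a \<in> degen_chains \<pi> N n \<Longrightarrow> - a \<in> degen_chains \<pi> N n"
  using degen_chains.diff[OF degen_chains.zero, of a] by simp

lemma degen_chains_add:
  "a \<in> degen_chains \<pi> N n \<Longrightarrow> b \<in> degen_chains \<pi> N n \<Longrightarrow> a + b \<in> degen_chains \<pi> N n"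
  using degen_chains.diff[of a _ _ _ "- b"] degen_chains_uminus by fastforce

lemma degen_chains_sum:
  "(\<And>i. i \<in> I \<Longrightarrow> f i \<in> degen_chains \<pi> N n) \<Longrightarrow> sum f I \<in> degen_chains \<pi> N n"
  by (induction I rule: infinite_finite_induct) (auto intro: degen_chains_add degen_chains.zero)

lemma degen_chains_cmul_sign:
  "a \<in> degen_chains \<pi> N n \<Longrightarrow> frag_cmul ((-1) ^ i) a \<in> degen_chains \<pi> N n"
  by (cases "even i") (auto intro: degen_chains_uminus)

lemma degen_gen_diff_in_degen_chains:
  assumes "length ys + 2 + length zs = n" and "length ys' + 2 + length zs' = n"
  shows "degen_gen \<pi> N ys x zs - degen_gen \<pi> N ys' x' zs' \<in> degen_chains \<pi> N n"
  using assms by (intro degen_chains.diff degen_chains.gen)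

locale birack_kink =
  fixes \<alpha> \<beta> :: "'x \<Rightarrow> 'x \<Rightarrow> 'x" and \<pi> :: "'x \<Rightarrow> 'x"
  assumes inj_alpha: "\<And>x. inj (\<alpha> x)" and inj_beta: "\<And>x. inj (\<beta> x)"
    and kink: "\<And>x. \<alpha> (\<pi> x) x = \<beta> x (\<pi> x)"
    and exchange_alpha_alpha: "\<And>x y z. \<alpha> (\<alpha> x y) (\<alpha> x z) = \<alpha> (\<beta> y x) (\<alpha> y z)"
    and exchange_beta_alpha: "\<And>x y z. \<beta> (\<alpha> x y) (\<alpha> x z) = \<alpha> (\<beta> y x) (\<beta> y z)"
    and exchange_beta_beta: "\<And>x y z. \<beta> (\<alpha> x y) (\<beta> x z) = \<beta> (\<beta> y x) (\<beta> y z)"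
begin

lemma alpha_pi: "\<alpha> (\<pi> x) = \<alpha> x"
proof
  fix z
  have "\<alpha> (\<alpha> (\<pi> x) x) (\<alpha> (\<pi> x) z) = \<alpha> (\<alpha> (\<pi> x) x) (\<alpha> x z)"
    using exchange_alpha_alpha[of "\<pi> x" x z] by (simp add: kink)
  then show "\<alpha> (\<pi> x) z = \<alpha> x z" using inj_alpha by (meson injD)
qed

lemma beta_pi: "\<beta> (\<pi> x) = \<beta> x"
proof
  fix z
  have "\<beta> (\<alpha> (\<pi> x) x) (\<beta> (\<pi> x) z) = \<beta> (\<alpha> (\<pi> x) x) (\<beta> x z)"
    using exchange_beta_beta[of "\<pi> x" x z] by (simp add: kink)
  then show "\<beta> (\<pi> x) z = \<beta> x z" using inj_beta by (meson injD)
qed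

lemma beta_self_pi: "\<beta> x (\<pi> x) = \<alpha> x x"
  using kink[of x] alpha_pi[of x] by simp

lemma pi_unique: "\<beta> x z = \<alpha> x x \<Longrightarrow> z = \<pi> x"
  using beta_self_pi[of x] inj_beta by (metis injD)

lemma pi_alpha: "\<pi> (\<alpha> y x) = \<alpha> y (\<pi> x)"
proof -
  have "\<beta> (\<alpha> y x) (\<alpha> y (\<pi> x)) = \<alpha> (\<beta> x y) (\<beta> x (\<pi> x))" by (rule exchange_beta_alpha)
  also have "\<dots> = \<alpha> (\<beta> x y) (\<alpha> x x)" by (simp add: beta_self_pi)
  also have "\<dots> = \<alpha> (\<alpha> y x) (\<alpha> y x)" by (rule exchange_alpha_alpha[symmetric])
  finally show ?thesis using pi_unique by metis
qed

lemma pi_beta: "\<pi> (\<beta> y x) = \<beta> y (\<pi> x)"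
proof -
  have "\<beta> (\<beta> y x) (\<beta> y (\<pi> x)) = \<beta> (\<alpha> x y) (\<beta> x (\<pi> x))" by (rule exchange_beta_beta[symmetric])
  also have "\<dots> = \<beta> (\<alpha> x y) (\<alpha> x x)" by (simp add: beta_self_pi)
  also have "\<dots> = \<alpha> (\<beta> y x) (\<beta> y x)" by (rule exchange_beta_alpha)
  finally show ?thesis using pi_unique by metis
qed

lemma funpow_pi_alpha: "(\<pi> ^^ k) (\<alpha> y x) = \<alpha> y ((\<pi> ^^ k) x)"
  by (induction k) (simp_all add: pi_alpha)

lemma funpow_pi_beta: "(\<pi> ^^ k) (\<beta> y x) = \<beta> y ((\<pi> ^^ k) x)"
  by (induction k) (simp_all add: pi_beta)

lemma face_chain_degen_gen_left:
  assumes "i < length ys"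
  defines "y \<equiv> ys ! i"
  shows "face_chain \<alpha> \<beta> i (degen_gen \<pi> N ys x zs)
           = degen_gen \<pi> N (face1 i ys) x zs
             - degen_gen \<pi> N (face2 \<alpha> \<beta> i ys) (\<alpha> y x) (map (\<alpha> y) zs)"
  using assms
  by (simp add: face_chain_def degen_gen_def frag_extend_sum o_def sum_subtractf
      face1_def face2_def nth_append funpow_pi_alpha)

lemma face_chain_degen_gen_right:
  assumes "j < length zs"
  defines "z \<equiv> zs ! j"
  shows "face_chain \<alpha> \<beta> (length ys + 2 + j) (degen_gen \<pi> N ys x zs)
           = degen_gen \<pi> N ys x (face1 j zs)
             - degen_gen \<pi> N (map (\<beta> z) ys) (\<beta> z x) (face2 \<alpha> \<beta> j zs)"
  using assms
  by (simp add: face_chain_def degen_gen_def frag_extend_sum o_def sum_subtractf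
      face1_def face2_def nth_append funpow_pi_beta eval_nat_numeral)

lemma face2_degenerate_pair:
  "face2 \<alpha> \<beta> (length ys) (ys @ \<pi> w # w # zs) = face2 \<alpha> \<beta> (Suc (length ys)) (ys @ \<pi> w # w # zs)"
  by (simp add: face2_def nth_append alpha_pi beta_pi kink beta_self_pi)

lemma face_chain_degen_gen_pair:
  assumes "(\<pi> ^^ N) = id" and "0 < N"
  shows "face_chain \<alpha> \<beta> (length ys) (degen_gen \<pi> N ys x zs)
           = face_chain \<alpha> \<beta> (Suc (length ys)) (degen_gen \<pi> N ys x zs)"
proof -
  let ?L = "\<lambda>k. ys @ (\<pi> ^^ k) x # (\<pi> ^^ (k - 1)) x # zs"
  have face1_sums: "(\<Sum>k\<in>{1..N}. frag_of (face1 (length ys) (?L k)))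
                      = (\<Sum>k\<in>{1..N}. frag_of (face1 (Suc (length ys)) (?L k)))"
    using sum_funpow_periodic_shift[OF assms, of "\<lambda>w. frag_of (ys @ w # zs)"]
    by (simp add: face1_def)
  have "face2 \<alpha> \<beta> (length ys) (?L k) = face2 \<alpha> \<beta> (Suc (length ys)) (?L k)" if "1 \<le> k" for k
    using that face2_degenerate_pair[of ys "(\<pi> ^^ (k - 1)) x" zs]
    by (cases k) simp_all
  then have face2_sums: "(\<Sum>k\<in>{1..N}. frag_of (face2 \<alpha> \<beta> (length ys) (?L k)))
                           = (\<Sum>k\<in>{1..N}. frag_of (face2 \<alpha> \<beta> (Suc (length ys)) (?L k)))"
    by (intro sum.cong) auto
  show ?thesis
    by (simp add: face_chain_def degen_gen_def frag_extend_sum o_def sum_subtractf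
        face1_sums face2_sums del: One_nat_def)
qed

lemma bd_degen_gen:
  assumes "(\<pi> ^^ N) = id" and "0 < N" and len: "length ys + 2 + length zs = n"
  shows "bd \<alpha> \<beta> (degen_gen \<pi> N ys x zs) \<in> degen_chains \<pi> N (n - 1)"
proof -
  let ?T = "\<lambda>i. face_chain \<alpha> \<beta> i (degen_gen \<pi> N ys x zs)"
  have "bd \<alpha> \<beta> (degen_gen \<pi> N ys x zs) = (\<Sum>i<n. frag_cmul ((-1) ^ Suc i) (?T i))"
    unfolding degen_gen_def using len by (intro bd_sum_eq_sum_face_chain) simp_all
  also have "\<dots> = (\<Sum>i\<in>{..<n} - {length ys, Suc (length ys)}. frag_cmul ((-1) ^ Suc i) (?T i))"
    using len face_chain_degen_gen_pair[OF assms(1,2)]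
    by (intro alternating_sum_cancel_adjacent) auto
  also have "\<dots> \<in> degen_chains \<pi> N (n - 1)"
  proof (intro degen_chains_sum degen_chains_cmul_sign)
    fix i assume i: "i \<in> {..<n} - {length ys, Suc (length ys)}"
    show "?T i \<in> degen_chains \<pi> N (n - 1)"
    proof (cases "i < length ys")
      case True
      then show ?thesis
        using len by (simp add: face_chain_degen_gen_left degen_gen_diff_in_degen_chains
            face1_def face2_def)
    next
      case False
      then have "length ys + 2 \<le> i" and "i < n" using i by auto
      then obtain j where "i = length ys + 2 + j" and "j < length zs"
        using len by (metis add_less_cancel_left le_Suc_ex)
      then have "?T i = degen_gen \<pi> N ys x (face1 j zs)
                   - degen_gen \<pi> N (map (\<beta> (zs ! j)) ys) (\<beta> (zs ! j) x) (face2 \<alpha> \<beta> j zs)"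
        by (simp only: face_chain_degen_gen_right)
      then show ?thesis
        using len \<open>j < length zs\<close>
        by (auto intro!: degen_gen_diff_in_degen_chains simp: face1_def face2_def)
    qed
  qed
  finally show ?thesis .
qed

theorem bd_degen_chains:
  assumes "(\<pi> ^^ N) = id" and "0 < N" and "c \<in> degen_chains \<pi> N n"
  shows "bd \<alpha> \<beta> c \<in> degen_chains \<pi> N (n - 1)"
  using assms(3)
proof (induction rule: degen_chains.induct)
  case zero
  then show ?case by (simp add: bd_def degen_chains.zero)
next
  case (gen ys zs x)
  then show ?case by (rule bd_degen_gen[OF assms(1,2)])
next
  case (diff a b)
  then show ?case by (simp add: bd_def frag_extend_diff degen_chains.diff)
qed

end

lemma augmented_birack_imp_birack_kink:
  assumes "augmented_birack G \<alpha> \<beta> \<alpha>b \<beta>b \<pi>"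
  shows "birack_kink \<alpha> \<beta> \<pi>"
proof
  have "bij_subgroup G" and "\<alpha> x \<in> G" "\<beta> x \<in> G" for x
    using assms unfolding augmented_birack_def by blast+
  then show "inj (\<alpha> x)" "inj (\<beta> x)" for x
    unfolding bij_subgroup_def using bij_is_inj by blast+
  have exchange: "\<alpha> (\<alpha> x y) \<circ> \<alpha> x = \<alpha> (\<beta> y x) \<circ> \<alpha> y \<and>
                  \<beta> (\<alpha> x y) \<circ> \<alpha> x = \<alpha> (\<beta> y x) \<circ> \<beta> y \<and>
                  \<beta> (\<alpha> x y) \<circ> \<beta> x = \<beta> (\<beta> y x) \<circ> \<beta> y" for x y
    using assms unfolding augmented_birack_def by blast
  show "\<alpha> (\<pi> x) x = \<beta> x (\<pi> x)" for x
    using assms unfolding augmented_birack_def by blast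
  show "\<alpha> (\<alpha> x y) (\<alpha> x z) = \<alpha> (\<beta> y x) (\<alpha> y z)"
    and "\<beta> (\<alpha> x y) (\<alpha> x z) = \<alpha> (\<beta> y x) (\<beta> y z)"
    and "\<beta> (\<alpha> x y) (\<beta> x z) = \<beta> (\<beta> y x) (\<beta> y z)" for x y z
    using exchange[of x y] by (metis comp_apply)+
qed

theorem mainTheorem12:
  fixes G :: "('x \<Rightarrow> 'x) set" and \<alpha> \<beta> \<alpha>b \<beta>b :: "'x \<Rightarrow> 'x \<Rightarrow> 'x" and \<pi> :: "'x \<Rightarrow> 'x"
  assumes "augmented_birack G \<alpha> \<beta> \<alpha>b \<beta>b \<pi>"
    and "\<exists>M>0. (\<pi> ^^ M) = id"
    and "N = characteristic \<pi>"
  shows "\<forall>n. \<forall>c\<in>degen_chains \<pi> N n. bd \<alpha> \<beta> c \<in> degen_chains \<pi> N (n - 1)"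
proof -
  interpret birack_kink \<alpha> \<beta> \<pi>
    using assms(1) by (rule augmented_birack_imp_birack_kink)
  have "0 < N \<and> (\<pi> ^^ N) = id"
    unfolding assms(3) characteristic_def using assms(2) by (rule LeastI_ex)
  then show ?thesis using bd_degen_chains by blast
qed

end
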